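(* Let $a,b$ be positive integers, and let $m,n$ be coprime positive integers with $\dfrac{\sigma(a)}{\sigma(b)}=\dfrac{m}{n}$. Let $x$ be a positive integer such that $p=nx-1$ and $q=mx-1$ are primes, and let $z$ be a positive integer such that $z,a,p$ are pairwise coprime and $z,b,q$ are pairwise coprime. Then: (i) $zap$ and $zbq$ are amicable if and only if $$\frac{z}{\sigma(z)}=\frac{nx\,\sigma(a)}{(na+mb)x-a-b}.$$ (ii) If $zap$ and $zbq$ are amicable and the fraction $\dfrac{nx\,\sigma(a)}{(na+mb)x-a-b}$ is written in lowest terms as $\dfrac{r}{s}$, then $z$ is deficient ($\sigma(z)<2z$), $r$ divides $z$, $s\ge\sigma(r)$, if $s=\sigma(r)$ then $z=r$, and $r$ is deficient ($\sigma(r)<2r$).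
   Context: For a positive integer $N$, $\sigma(N)$ denotes the sum of all positive divisors of $N$. Positive integers $M,N$ are amicable if $\sigma(M)-M=N$ and $\sigma(N)-N=M$ (equivalently $\sigma(M)=\sigma(N)=M+N$). A positive integer $N$ is deficient if $\sigma(N)<2N$. *)

theory Defs
  imports Complex_Main "HOL-Computational_Algebra.Primes"
begin

definition sigma :: "nat \<Rightarrow> nat" where
  "sigma N = (\<Sum>d \<in> {d. d dvd N}. d)"

definition amicable :: "nat \<Rightarrow> nat \<Rightarrow> bool" where
  "amicable M N \<longleftrightarrow> M > 0 \<and> N > 0 \<and> sigma M - M = N \<and> sigma N - N = M"

definition deficient :: "nat \<Rightarrow> bool" where
  "deficient N \<longleftrightarrow> N > 0 \<and> sigma N < 2 * N"

end

theory Submission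
  imports Defs
begin

text \<open>
  By coprimality \<open>\<sigma>(zap) = \<sigma>(z)\<sigma>(a)(p+1)\<close> and \<open>\<sigma>(zbq) = \<sigma>(z)\<sigma>(b)(q+1)\<close>, and the two
  agree because \<open>\<sigma>(a)(p+1) = \<sigma>(a)nx = \<sigma>(b)mx = \<sigma>(b)(q+1)\<close>.  So the pair is amicable iff
  this common value equals \<open>zap + zbq = z((na+mb)x - a - b)\<close>, which is (i).  Since
  \<open>ap + bq < \<sigma>(a)(p+1) + \<sigma>(b)(q+1)\<close>, this forces \<open>\<sigma>(z) < 2z\<close>.  Writing \<open>z/\<sigma>(z) = r/s\<close> in
  lowest terms gives \<open>z = rk\<close> and \<open>\<sigma>(z) = sk\<close>, and \<open>k\<sigma>(r) \<le> \<sigma>(rk)\<close>, strictly for \<open>k > 1\<close>,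
  yields the remaining claims.
\<close>

lemma sigma_ge_self: "0 < N \<Longrightarrow> N \<le> sigma N"
  unfolding sigma_def by (rule member_le_sum) (auto simp: finite_divisors_nat)

lemma sigma_pos: "0 < N \<Longrightarrow> 0 < sigma N"
  using sigma_ge_self by (metis less_le_trans)

lemma rat_of_nat_frac_eq_iff:
  "0 < s \<Longrightarrow> 0 < t \<Longrightarrow> (of_nat r / of_nat s :: rat) = of_nat z / of_nat t \<longleftrightarrow> r * t = z * s"
  by (simp add: frac_eq_eq flip: of_nat_mult)

lemma sigma_prime:
  assumes "prime p"
  shows "sigma p = p + 1"
proof -
  have "{d. d dvd p} = {1, p}" and "p \<noteq> 1"
    using assms by (auto simp: prime_nat_iff)
  then show ?thesis
    unfolding sigma_def by simp
qed

lemma sigma_mult_coprime: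
  assumes "coprime a b" "0 < a" "0 < b"
  shows "sigma (a * b) = sigma a * sigma b"
proof -
  let ?mult = "\<lambda>(u, v). u * v :: nat"
  let ?pairs = "{u. u dvd a} \<times> {v. v dvd b}"
  have divisors: "{d. d dvd a * b} = ?mult ` ?pairs"
    by (auto intro: mult_dvd_mono dest: division_decomp)
  have inj: "inj_on ?mult ?pairs"
  proof (rule inj_onI, clarify)
    fix u v u' v' :: nat
    assume dvd: "u dvd a" "v dvd b" "u' dvd a" "v' dvd b" and eq: "u * v = u' * v'"
    have "coprime u v'" "coprime u' v"
      using assms(1) dvd by (meson coprime_divisors)+
    then have "u dvd u'" "u' dvd u"
      using eq by (metis coprime_dvd_mult_left_iff dvd_triv_left)+
    then have "u = u'"
      by (rule dvd_antisym)
    moreover have "0 < u"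
      using dvd(1) assms(2) by (auto intro: gr0I)
    ultimately show "u = u' \<and> v = v'"
      using eq by simp
  qed
  have "sigma (a * b) = (\<Sum>(u, v)\<in>?pairs. u * v)"
    unfolding sigma_def divisors by (subst sum.reindex[OF inj]) (simp add: case_prod_beta)
  also have "\<dots> = sigma a * sigma b"
    unfolding sigma_def by (simp add: sum_product sum.cartesian_product)
  finally show ?thesis .
qed

lemma mult_sigma_less_sigma_mult:
  assumes "0 < r" "1 < k"
  shows "k * sigma r < sigma (r * k)"
proof -
  let ?multiples = "(\<lambda>d. d * k) ` {d. d dvd r}"
  have "k * sigma r = (\<Sum>d\<in>?multiples. d)"
    unfolding sigma_def using assms(2)
    by (simp add: sum.reindex inj_on_def sum_distrib_left mult.commute)
  also have "\<dots> < (\<Sum>d\<in>insert 1 ?multiples. d)"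
  proof -
    have "finite ?multiples"
      using assms(1) by (simp add: finite_divisors_nat)
    moreover have "1 \<notin> ?multiples"
      using assms(2) by (metis dvd_triv_right imageE nat_dvd_1_iff_1 less_irrefl)
    ultimately show ?thesis
      by simp
  qed
  also have "\<dots> \<le> sigma (r * k)"
    unfolding sigma_def using assms
    by (intro sum_mono2) (auto simp: finite_divisors_nat)
  finally show ?thesis .
qed

lemma mult_sigma_le_sigma_mult: "0 < r \<Longrightarrow> 0 < k \<Longrightarrow> k * sigma r \<le> sigma (r * k)"
  using mult_sigma_less_sigma_mult[of r k] by (cases "k = 1") auto

lemma deficient_dvd:
  assumes "deficient N" "d dvd N"
  shows "deficient d"
proof -
  obtain k where N: "N = d * k"
    using assms(2) by blast
  have "0 < d" "0 < k"
    using assms(1) N by (auto simp: deficient_def)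
  then have "k * sigma d \<le> sigma N"
    using N by (simp add: mult_sigma_le_sigma_mult)
  also have "\<dots> < k * (2 * d)"
    using assms(1) N by (simp add: deficient_def algebra_simps)
  finally have "k * sigma d < k * (2 * d)" .
  with \<open>0 < d\<close> show ?thesis
    unfolding deficient_def by simp
qed

lemma abundancy_lowest_terms:
  assumes "0 < z" "0 < s" "coprime r s" and abundancy: "r * sigma z = z * s"
  shows "r dvd z" "sigma r \<le> s" "s = sigma r \<Longrightarrow> z = r"
proof -
  have "r dvd z * s"
    by (metis abundancy dvd_triv_left)
  with assms(3) show "r dvd z"
    by (simp add: coprime_dvd_mult_left_iff)
  then obtain k where z: "z = r * k" ..
  have "0 < r" "0 < k"
    using assms(1) z by auto
  then have sigma_z: "sigma z = k * s"
    using abundancy z by (simp add: algebra_simps)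
  show "sigma r \<le> s"
    using mult_sigma_le_sigma_mult[OF \<open>0 < r\<close> \<open>0 < k\<close>] \<open>0 < k\<close> z sigma_z by simp
  show "z = r" if "s = sigma r"
  proof (rule ccontr)
    assume "z \<noteq> r"
    then have "1 < k"
      using z \<open>0 < k\<close> by (cases "k = 1") auto
    then show False
      using mult_sigma_less_sigma_mult[OF \<open>0 < r\<close> \<open>1 < k\<close>] z sigma_z that by simp
  qed
qed

lemma amicable_iff_common_sigma:
  "sigma M = S \<Longrightarrow> sigma N = S \<Longrightarrow> 0 < M \<Longrightarrow> 0 < N \<Longrightarrow> amicable M N \<longleftrightarrow> M + N = S"
  unfolding amicable_def by auto

lemma sigma_mult_coprime_prime:
  assumes "prime p" "0 < z" "0 < a" "coprime z a" "coprime z p" "coprime a p"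
  shows "sigma (z * a * p) = sigma z * sigma a * (p + 1)"
  using assms prime_gt_0_nat[OF assms(1)]
  by (simp add: sigma_mult_coprime sigma_prime)

lemma amicable_iff_sigma_balance:
  assumes "prime p" "prime q" "0 < z" "0 < a" "0 < b"
    and "coprime z a" "coprime z p" "coprime a p"
    and "coprime z b" "coprime z q" "coprime b q"
    and balance: "sigma a * (p + 1) = sigma b * (q + 1)"
  shows "amicable (z * a * p) (z * b * q) \<longleftrightarrow> z * (a * p + b * q) = sigma z * (sigma a * (p + 1))"
proof -
  have "sigma (z * a * p) = sigma z * (sigma a * (p + 1))"
    using sigma_mult_coprime_prime[OF assms(1,3,4,6,7,8)] by (simp only: mult.assoc)
  moreover have "sigma (z * b * q) = sigma z * (sigma a * (p + 1))"
    using sigma_mult_coprime_prime[OF assms(2,3,5,9,10,11)] balance by (simp only: mult.assoc)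
  moreover have "0 < z * a * p" "0 < z * b * q"
    using assms prime_gt_0_nat by auto
  ultimately have "amicable (z * a * p) (z * b * q) \<longleftrightarrow>
      z * a * p + z * b * q = sigma z * (sigma a * (p + 1))"
    by (rule amicable_iff_common_sigma)
  then show ?thesis
    by (simp add: add_mult_distrib2 mult.assoc)
qed

lemma deficient_of_sigma_balance:
  assumes "0 < z" "0 < a" "0 < b"
    and balance: "sigma a * (p + 1) = sigma b * (q + 1)"
    and sum_eq: "z * (a * p + b * q) = sigma z * (sigma a * (p + 1))"
  shows "deficient z"
proof -
  define T where "T = sigma a * (p + 1)"
  have "a * p \<le> sigma a * p"
    using sigma_ge_self[OF assms(2)] by (rule mult_le_mono1)
  also have "\<dots> < T"
    unfolding T_def using sigma_pos[OF assms(2)] by simp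
  finally have "a * p < T" .
  have "b * q \<le> sigma b * q"
    using sigma_ge_self[OF assms(3)] by (rule mult_le_mono1)
  also have "\<dots> < T"
    unfolding T_def balance using sigma_pos[OF assms(3)] by simp
  finally have "b * q < T" .
  have "sigma z * T = z * (a * p + b * q)"
    unfolding T_def sum_eq ..
  also have "\<dots> < z * (2 * T)"
    using \<open>a * p < T\<close> \<open>b * q < T\<close> assms(1) by simp
  finally have "sigma z * T < (2 * z) * T"
    by (simp only: ac_simps)
  then show ?thesis
    using assms(1) unfolding deficient_def by simp
qed

lemma abundancy_eq_frac_iff:
  assumes p: "p + 1 = n * x" and q: "q + 1 = m * x" and "0 < z" "0 < a * p + b * q"
  shows "(of_nat z / of_nat (sigma z) :: rat) =
      of_int (int n * int x * int A) / of_int ((int n * int a + int m * int b) * int x - int a - int b)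
    \<longleftrightarrow> z * (a * p + b * q) = sigma z * (A * (p + 1))"
proof -
  have int_p: "int p = int n * int x - 1" and int_q: "int q = int m * int x - 1"
    using arg_cong[OF p, of int] arg_cong[OF q, of int] by simp_all
  have denominator: "(int n * int a + int m * int b) * int x - int a - int b = int (a * p + b * q)"
    unfolding of_nat_add of_nat_mult int_p int_q by (simp add: algebra_simps)
  have numerator: "int n * int x * int A = int (A * (p + 1))"
    unfolding p by (simp add: ac_simps)
  show ?thesis
    unfolding numerator denominator of_int_of_nat_eq
      rat_of_nat_frac_eq_iff[OF sigma_pos[OF assms(3)] assms(4)]
    by (simp only: mult.commute)
qed

theorem mainTheorem11:
  fixes a b m n x z p q :: nat
  assumes "a > 0" "b > 0" "m > 0" "n > 0" "coprime m n"
    and "(of_nat (sigma a) / of_nat (sigma b) :: rat) = of_nat m / of_nat n"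
    and "x > 0" "p = n * x - 1" "q = m * x - 1" "prime p" "prime q"
    and "z > 0"
    and "coprime z a" "coprime z p" "coprime a p"
    and "coprime z b" "coprime z q" "coprime b q"
  shows "(amicable (z * a * p) (z * b * q) \<longleftrightarrow>
            (of_nat z / of_nat (sigma z) :: rat) =
              of_int (int n * int x * int (sigma a)) /
              of_int ((int n * int a + int m * int b) * int x - int a - int b)) \<and>
         (amicable (z * a * p) (z * b * q) \<longrightarrow>
         (\<forall>r s :: nat. s > 0 \<and> coprime r s \<and>
            (of_nat r / of_nat s :: rat) =
              of_int (int n * int x * int (sigma a)) /
              of_int ((int n * int a + int m * int b) * int x - int a - int b)
          \<longrightarrow> deficient z \<and> r dvd z \<and> s \<ge> sigma r \<and> (s = sigma r \<longrightarrow> z = r) \<and> deficient r))"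
proof -
  have p: "p + 1 = n * x"
    using assms(8) prime_gt_0_nat[OF assms(10)] by simp
  have q: "q + 1 = m * x"
    using assms(9) prime_gt_0_nat[OF assms(11)] by simp
  have "sigma a * n = sigma b * m"
    using assms(6) rat_of_nat_frac_eq_iff[OF sigma_pos[OF assms(2)] assms(4)] by (simp add: ac_simps)
  then have balance: "sigma a * (p + 1) = sigma b * (q + 1)"
    unfolding p q by (metis mult.assoc)
  have amicable_iff: "amicable (z * a * p) (z * b * q) \<longleftrightarrow>
      z * (a * p + b * q) = sigma z * (sigma a * (p + 1))"
    by (rule amicable_iff_sigma_balance[OF assms(10,11,12,1,2,13-18) balance])
  define Q where "Q = (of_int (int n * int x * int (sigma a)) /
      of_int ((int n * int a + int m * int b) * int x - int a - int b) :: rat)"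
  have "0 < a * p + b * q"
    using assms(1) prime_gt_0_nat[OF assms(10)] by simp
  have ratio: "(of_nat z / of_nat (sigma z) :: rat) = Q
      \<longleftrightarrow> z * (a * p + b * q) = sigma z * (sigma a * (p + 1))"
    unfolding Q_def using p q assms(12) \<open>0 < a * p + b * q\<close> by (rule abundancy_eq_frac_iff)
  have "deficient z \<and> r dvd z \<and> sigma r \<le> s \<and> (s = sigma r \<longrightarrow> z = r) \<and> deficient r"
    if "amicable (z * a * p) (z * b * q)" "0 < s" "coprime r s" "(of_nat r / of_nat s :: rat) = Q"
    for r s
  proof -
    have sum: "z * (a * p + b * q) = sigma z * (sigma a * (p + 1))"
      using that(1) amicable_iff by blast
    then have "(of_nat r / of_nat s :: rat) = of_nat z / of_nat (sigma z)"
      using that(4) ratio by simp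
    then have "r * sigma z = z * s"
      unfolding rat_of_nat_frac_eq_iff[OF that(2) sigma_pos[OF assms(12)]] .
    moreover have "deficient z"
      by (rule deficient_of_sigma_balance[OF assms(12,1,2) balance sum])
    ultimately show ?thesis
      using abundancy_lowest_terms[OF assms(12) that(2,3)] deficient_dvd by blast
  qed
  then show ?thesis
    unfolding Q_def[symmetric] using amicable_iff ratio by blast
qed

end
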